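(* Let $M\ge 1$ and let $T'\ge M$ be an integer. Let $H_{11},H_{12},H_{21},H_{22}$ be mutually independent $M\times M$ random matrices whose entries are i.i.d. $\mathcal{CN}(0,1)$, and define $$V_{11}=\frac{H_{12}^{-1}}{\sqrt{\mathrm{tr}\left(H_{12}^{-1}H_{12}^{-H}\right)}},\qquad V_{21}=\frac{H_{22}^{-1}}{\sqrt{\mathrm{tr}\left(H_{22}^{-1}H_{22}^{-H}\right)}}.$$ Let $c_1,c_2>0$ and $\sigma^2>0$ be constants. Let $\mathcal{C}_1,\mathcal{C}_2$ be finite sets of $M\times T'$ complex matrices (codebooks) such that for every two distinct $A,A'\in\mathcal{C}_1$ the difference $A-A'$ has rank $M$, and for every two distinct $B,B'\in\mathcal{C}_2$ the difference $B-B'$ has rank $M$. For $P>0$ and distinct pairs $(A,B)\neq(A',B')$ in $\mathcal{C}_1\times\mathcal{C}_2$, define the average pairwise error probability $$P_e\big((A,B)\to(A',B')\big)=\mathbb{E}\left[Q\left(\sqrt{\frac{P\,\left\|\sqrt{c_1}\,H_{11}V_{11}(A-A')+\sqrt{c_2}\,H_{21}V_{21}(B-B')\right\|^2}{2\sigma^2}}\right)\right],$$ where the expectation is over the channel matrices. Then there exists a constant $c>0$, independent of $P$, such that $P_e\big((A,B)\to(A',B')\big)\le c\,P^{-M}$ for all sufficiently large $P$.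
   Context: $\mathcal{CN}(0,1)$ denotes the circularly symmetric complex Gaussian distribution with mean $0$ and variance $1$. $Q(x)=\frac{1}{\sqrt{2\pi}}\int_x^\infty e^{-t^2/2}\,dt$ is the Gaussian tail function. $\|\cdot\|$ is the Frobenius norm, $A^{-H}$ denotes the conjugate transpose of $A^{-1}$, and $\mathrm{tr}$ is the trace. This quantity is the pairwise error probability of maximum-likelihood decoding of $(A,B)$ from $Y=\sqrt{c_1P}H_{11}V_{11}A+\sqrt{c_2P}H_{21}V_{21}B+N$ with $N$ having i.i.d. $\mathcal{CN}(0,\sigma^2)$ entries. *)

theory Defs
  imports "HOL-Analysis.Analysis"
begin

definition Qfun :: "real \<Rightarrow> real" where
  "Qfun x = (LBINT t:{x..}. exp (- (t\<^sup>2) / 2)) / sqrt (2 * pi)"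

text \<open>Distribution of an M x M random matrix with i.i.d. CN(0,1) entries:
  density prod_{i,j} (1/pi) exp(-|h_ij|^2) = exp(-||H||_F^2) / pi^(M*M) w.r.t. Lebesgue measure.
  (The norm on complex^'m^'m is the Frobenius norm.)\<close>
definition cgauss_mat :: "(complex^'m::finite^'m) measure" where
  "cgauss_mat = density lborel
     (\<lambda>H. ennreal (exp (- (norm H)\<^sup>2) / pi ^ (CARD('m) * CARD('m))))"

definition conj_transpose :: "complex^'n^'m \<Rightarrow> complex^'m^'n" where
  "conj_transpose A = (\<chi> i j. cnj (A $ j $ i))"

text \<open>Matrix inverse, set to 0 on the (probability-zero) set of singular matrices.\<close>
definition cinv :: "complex^'m^'m \<Rightarrow> complex^'m^'m" where
  "cinv H = (if invertible H then matrix_inv H else 0)"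

definition precoder :: "complex^'m::finite^'m \<Rightarrow> complex^'m^'m" where
  "precoder H = (1 / sqrt (Re (trace (cinv H ** conj_transpose (cinv H))))) *\<^sub>R cinv H"

definition channel_measure ::
  "((complex^'m::finite^'m) \<times> (complex^'m^'m) \<times> (complex^'m^'m) \<times> (complex^'m^'m)) measure" where
  "channel_measure = cgauss_mat \<Otimes>\<^sub>M (cgauss_mat \<Otimes>\<^sub>M (cgauss_mat \<Otimes>\<^sub>M cgauss_mat))"

definition pep ::
  "real \<Rightarrow> real \<Rightarrow> real \<Rightarrow> real \<Rightarrow> complex^'t^'m::finite \<Rightarrow> complex^'t^'m \<Rightarrow>
   complex^'t^'m \<Rightarrow> complex^'t^'m \<Rightarrow> real" where
  "pep c1 c2 \<sigma>2 P A A' B B' =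
     (\<integral>(H11, H12, H21, H22). Qfun (sqrt (P * (norm
         (sqrt c1 *\<^sub>R (H11 ** precoder H12 ** (A - A'))
          + sqrt c2 *\<^sub>R (H21 ** precoder H22 ** (B - B'))))\<^sup>2 / (2 * \<sigma>2)))
      \<partial>channel_measure)"

end

theory Submission
  imports Defs "HOL-Probability.Probability"
begin

text \<open>Every nonzero codeword difference \<open>D\<close> has full row rank and hence a right inverse \<open>R\<close>.
  Suppose \<open>A \<noteq> A'\<close> (otherwise exchange the roles of the two users) and write the received
  difference as \<open>X = \<surd>c\<^sub>1 H\<^sub>1\<^sub>1 W D + K\<close> with \<open>W = V\<^sub>1\<^sub>1\<close>. For the \<open>j\<close>-th column \<open>u\<close> of \<open>R\<close> we get
  \<open>X u = H\<^sub>1\<^sub>1 v + K u\<close> with \<open>v = \<surd>c\<^sub>1 W e\<^sub>j\<close>, so \<open>\<parallel>X\<parallel>\<^sup>2 \<ge> \<parallel>H\<^sub>1\<^sub>1 v + K u\<parallel>\<^sup>2 / \<parallel>R\<parallel>\<^sup>2\<close>. As \<open>W\<close> has unit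
  Frobenius norm, \<open>j\<close> can be chosen such that some entry \<open>v\<^sub>l\<close> satisfies \<open>|v\<^sub>l|\<^sup>2 \<ge> c\<^sub>1 / M\<^sup>2\<close>. Given all
  other entries of \<open>H\<^sub>1\<^sub>1\<close>, the vector \<open>H\<^sub>1\<^sub>1 v + K u\<close> is \<open>v\<^sub>l\<close> times a shift of the \<open>l\<close>-th column of
  \<open>H\<^sub>1\<^sub>1\<close>, whose \<open>2M\<close> real coordinates are independent standard Gaussians; hence the average of
  \<open>exp (- a \<parallel>H\<^sub>1\<^sub>1 v + K u\<parallel>\<^sup>2)\<close> over \<open>H\<^sub>1\<^sub>1\<close> is at most \<open>(a |v\<^sub>l|\<^sup>2)\<^sup>-\<^sup>M\<close>. With \<open>Q x \<le> 2 exp (- x\<^sup>2 / 4)\<close> and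
  \<open>a\<close> proportional to \<open>P\<close> this bounds the error probability by \<open>c P\<^sup>-\<^sup>M\<close>, uniformly in the other
  channel matrices. The precoder is only meaningful for invertible \<open>H\<^sub>1\<^sub>2\<close>, which holds almost surely
  because \<open>t \<mapsto> det (H + t I)\<close> is a nonzero polynomial, so singular matrices meet every line of
  direction \<open>I\<close> in a finite set.\<close>

section \<open>Gaussian integrals\<close>

lemma nn_integral_gaussian:
  fixes a c :: real
  assumes "a > 0"
  shows "(\<integral>\<^sup>+ t. ennreal (exp (- a * (t - c)\<^sup>2)) \<partial>lborel) = ennreal (sqrt (pi / a))"
proof -
  define s where "s = sqrt (1 / (2 * a))"
  have s: "s > 0" and s2: "s\<^sup>2 = 1 / (2 * a)"
    using assms by (simp_all add: s_def)
  have density: "exp (- a * (t - c)\<^sup>2) = sqrt (pi / a) * normal_density c s t" for t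
  proof -
    have "2 * pi * s\<^sup>2 = pi / a" "- (t - c)\<^sup>2 / (2 * s\<^sup>2) = - a * (t - c)\<^sup>2"
      using assms unfolding s2 by (simp_all add: field_simps)
    then show ?thesis using assms by (simp add: normal_density_def)
  qed
  have "(\<integral>\<^sup>+ t. ennreal (exp (- a * (t - c)\<^sup>2)) \<partial>lborel)
      = (\<integral>\<^sup>+ t. ennreal (sqrt (pi / a)) * ennreal (normal_density c s t) \<partial>lborel)"
    using assms by (intro nn_integral_cong, subst density, intro ennreal_mult) auto
  also have "\<dots> = ennreal (sqrt (pi / a)) * (\<integral>\<^sup>+ t. ennreal (normal_density c s t) \<partial>lborel)"
    by (simp add: nn_integral_cmult)
  also have "(\<integral>\<^sup>+ t. ennreal (normal_density c s t) \<partial>lborel) = 1"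
    using prob_space.emeasure_space_1[OF prob_space_normal_density[OF s]]
    by (simp add: emeasure_density)
  finally show ?thesis by simp
qed

lemma nn_integral_gaussian_normalized:
  fixes a c :: real
  assumes "a > 0"
  shows "(\<integral>\<^sup>+ t. ennreal (exp (- a * (t - c)\<^sup>2) / sqrt pi) \<partial>lborel) = ennreal (1 / sqrt a)"
proof -
  have "(\<integral>\<^sup>+ t. ennreal (exp (- a * (t - c)\<^sup>2) / sqrt pi) \<partial>lborel)
      = (\<integral>\<^sup>+ t. ennreal (exp (- a * (t - c)\<^sup>2)) \<partial>lborel) * ennreal (1 / sqrt pi)"
    by (simp add: ennreal_mult[symmetric] nn_integral_multc[symmetric])
  also have "\<dots> = ennreal (sqrt (pi / a)) * ennreal (1 / sqrt pi)"
    using assms by (simp only: nn_integral_gaussian)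
  also have "\<dots> = ennreal (1 / sqrt a)"
    using assms by (subst ennreal_mult[symmetric]) (auto simp: real_sqrt_divide)
  finally show ?thesis .
qed

lemma nn_integral_PiM_gaussian:
  fixes a :: real and c :: "'i \<Rightarrow> real"
  assumes "finite I" "a > 0"
  shows "(\<integral>\<^sup>+ y. (\<Prod>i\<in>I. ennreal (exp (- a * (y i - c i)\<^sup>2) / sqrt pi)) \<partial>(\<Pi>\<^sub>M i\<in>I. lborel))
       = ennreal (1 / sqrt a) ^ card I"
proof -
  interpret product_sigma_finite "\<lambda>_::'i. lborel :: real measure" by standard
  have "(\<integral>\<^sup>+ y. (\<Prod>i\<in>I. ennreal (exp (- a * (y i - c i)\<^sup>2) / sqrt pi)) \<partial>(\<Pi>\<^sub>M i\<in>I. lborel))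
      = (\<Prod>i\<in>I. \<integral>\<^sup>+ t. ennreal (exp (- a * (t - c i)\<^sup>2) / sqrt pi) \<partial>lborel)"
    using assms(1) by (intro product_nn_integral_prod) auto
  also have "\<dots> = ennreal (1 / sqrt a) ^ card I"
    using nn_integral_gaussian_normalized[OF assms(2)] by simp
  finally show ?thesis .
qed

lemma Qfun_nonneg: "0 \<le> Qfun x"
  unfolding Qfun_def set_lebesgue_integral_def
  by (intro divide_nonneg_nonneg integral_nonneg) (auto simp: indicator_def)

lemma integral_le_of_nn_integral_le:
  fixes f :: "'a \<Rightarrow> real"
  assumes "\<And>x. 0 \<le> f x" "(\<integral>\<^sup>+ x. ennreal (f x) \<partial>M) \<le> ennreal B" "0 \<le> B"
  shows "integral\<^sup>L M f \<le> B"
proof (cases "integrable M f")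
  case True
  then have "ennreal (integral\<^sup>L M f) \<le> ennreal B"
    using assms(1,2) by (subst nn_integral_eq_integral[symmetric]) auto
  then show ?thesis using assms(3) by (simp add: ennreal_le_iff)
next
  case False
  then show ?thesis using assms(3) by (simp add: not_integrable_integral_eq)
qed

lemma Qfun_le_exp:
  assumes "0 \<le> x"
  shows "Qfun x \<le> 2 * exp (- x\<^sup>2 / 4)"
proof -
  have tail: "indicator {x..} t * exp (- t\<^sup>2 / 2) \<le> exp (- x\<^sup>2 / 4) * exp (- (1/4) * (t - 0)\<^sup>2)" for t
  proof (cases "x \<le> t")
    case True
    then have "x\<^sup>2 \<le> t\<^sup>2" using assms by (simp add: power_mono)
    then show ?thesis using True by (simp add: exp_add[symmetric])
  qed simp
  have "(\<integral>\<^sup>+ t. ennreal (indicator {x..} t * exp (- t\<^sup>2 / 2)) \<partial>lborel)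
      \<le> (\<integral>\<^sup>+ t. ennreal (exp (- x\<^sup>2 / 4)) * ennreal (exp (- (1/4) * (t - 0)\<^sup>2)) \<partial>lborel)"
    by (intro nn_integral_mono) (metis tail ennreal_leI ennreal_mult exp_ge_zero)
  also have "\<dots> = ennreal (exp (- x\<^sup>2 / 4)) * ennreal (sqrt (pi / (1/4)))"
    by (simp add: nn_integral_cmult nn_integral_gaussian[of "1/4" 0, simplified] del: mult_minus_left)
  also have "\<dots> = ennreal (exp (- x\<^sup>2 / 4) * (2 * sqrt pi))"
    by (simp add: ennreal_mult real_sqrt_mult mult_ac)
  finally have "(LBINT t:{x..}. exp (- t\<^sup>2 / 2)) \<le> exp (- x\<^sup>2 / 4) * (2 * sqrt pi)"
    unfolding set_lebesgue_integral_def by (intro integral_le_of_nn_integral_le) auto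
  then have "Qfun x \<le> exp (- x\<^sup>2 / 4) * 2 / sqrt 2"
    unfolding Qfun_def by (simp add: divide_le_eq real_sqrt_mult mult_ac)
  also have "\<dots> \<le> 2 * exp (- x\<^sup>2 / 4)"
    by (simp add: divide_le_eq)
  finally show ?thesis .
qed

lemma Qfun_sqrt_le_exp:
  assumes "0 \<le> y"
  shows "Qfun (sqrt y) \<le> 2 * exp (- y / 4)"
  using Qfun_le_exp[of "sqrt y"] assms by simp

section \<open>Bounding integrals over products of probability spaces\<close>

lemma nn_integral_le_of_simple_le:
  assumes "\<And>g. simple_function M g \<Longrightarrow> g \<le> f \<Longrightarrow> (\<integral>\<^sup>+ x. g x \<partial>M) \<le> B"
  shows "(\<integral>\<^sup>+ x. f x \<partial>M) \<le> B"
  unfolding nn_integral_def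
  using assms by (intro SUP_least) (auto simp: nn_integral_eq_simple_integral)

text \<open>The error-probability integrand involves \<open>matrix_inv\<close> and is never shown to be measurable.
  An iterated integral still bounds the integral over a product: the simple functions below the
  integrand are measurable, and Tonelli applies to them.\<close>

lemma nn_integral_pair_le_iterated_fst:
  assumes "sigma_finite_measure M1" "sigma_finite_measure M2"
  shows "(\<integral>\<^sup>+ z. f z \<partial>(M1 \<Otimes>\<^sub>M M2)) \<le> (\<integral>\<^sup>+ x. \<integral>\<^sup>+ y. f (x, y) \<partial>M2 \<partial>M1)"
proof (rule nn_integral_le_of_simple_le)
  interpret M2: sigma_finite_measure M2 by fact
  fix g assume g: "simple_function (M1 \<Otimes>\<^sub>M M2) g" "g \<le> f"
  have "(\<integral>\<^sup>+ z. g z \<partial>(M1 \<Otimes>\<^sub>M M2)) = (\<integral>\<^sup>+ x. \<integral>\<^sup>+ y. g (x, y) \<partial>M2 \<partial>M1)"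
    using g(1) by (intro M2.nn_integral_fst[symmetric] borel_measurable_simple_function)
  also have "\<dots> \<le> (\<integral>\<^sup>+ x. \<integral>\<^sup>+ y. f (x, y) \<partial>M2 \<partial>M1)"
    using g(2) by (intro nn_integral_mono) (auto simp: le_fun_def)
  finally show "(\<integral>\<^sup>+ z. g z \<partial>(M1 \<Otimes>\<^sub>M M2)) \<le> (\<integral>\<^sup>+ x. \<integral>\<^sup>+ y. f (x, y) \<partial>M2 \<partial>M1)" .
qed

lemma nn_integral_pair_le_iterated_snd:
  assumes "sigma_finite_measure M1" "sigma_finite_measure M2"
  shows "(\<integral>\<^sup>+ z. f z \<partial>(M1 \<Otimes>\<^sub>M M2)) \<le> (\<integral>\<^sup>+ y. \<integral>\<^sup>+ x. f (x, y) \<partial>M1 \<partial>M2)"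
proof (rule nn_integral_le_of_simple_le)
  interpret pair_sigma_finite M1 M2 using assms by (intro pair_sigma_finite.intro)
  fix g assume g: "simple_function (M1 \<Otimes>\<^sub>M M2) g" "g \<le> f"
  have "(\<integral>\<^sup>+ z. g z \<partial>(M1 \<Otimes>\<^sub>M M2)) = (\<integral>\<^sup>+ y. \<integral>\<^sup>+ x. g (x, y) \<partial>M1 \<partial>M2)"
    using g(1) by (intro nn_integral_snd[symmetric] borel_measurable_simple_function)
  also have "\<dots> \<le> (\<integral>\<^sup>+ y. \<integral>\<^sup>+ x. f (x, y) \<partial>M1 \<partial>M2)"
    using g(2) by (intro nn_integral_mono) (auto simp: le_fun_def)
  finally show "(\<integral>\<^sup>+ z. g z \<partial>(M1 \<Otimes>\<^sub>M M2)) \<le> (\<integral>\<^sup>+ y. \<integral>\<^sup>+ x. f (x, y) \<partial>M1 \<partial>M2)" .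
qed

lemma (in prob_space) nn_integral_le_const_AE:
  assumes "AE x in M. f x \<le> ennreal B"
  shows "(\<integral>\<^sup>+ x. f x \<partial>M) \<le> ennreal B"
proof -
  have "(\<integral>\<^sup>+ x. f x \<partial>M) \<le> (\<integral>\<^sup>+ x. ennreal B \<partial>M)"
    by (rule nn_integral_mono_AE[OF assms])
  then show ?thesis by (simp add: emeasure_space_1)
qed

lemma nn_integral_pair_le_of_AE_fst:
  assumes "prob_space M1" "prob_space M2" "AE x in M1. (\<integral>\<^sup>+ y. f (x, y) \<partial>M2) \<le> ennreal B"
  shows "(\<integral>\<^sup>+ z. f z \<partial>(M1 \<Otimes>\<^sub>M M2)) \<le> ennreal B"
  by (rule order_trans[OF nn_integral_pair_le_iterated_fst
        prob_space.nn_integral_le_const_AE[OF assms(1,3)]])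
     (use assms(1,2) prob_space_imp_sigma_finite in auto)

lemma nn_integral_pair_le_of_AE_snd:
  assumes "prob_space M1" "prob_space M2" "AE y in M2. (\<integral>\<^sup>+ x. f (x, y) \<partial>M1) \<le> ennreal B"
  shows "(\<integral>\<^sup>+ z. f z \<partial>(M1 \<Otimes>\<^sub>M M2)) \<le> ennreal B"
  by (rule order_trans[OF nn_integral_pair_le_iterated_snd
        prob_space.nn_integral_le_const_AE[OF assms(2,3)]])
     (use assms(1,2) prob_space_imp_sigma_finite in auto)

section \<open>Euclidean spaces\<close>

definition std_gaussian_density :: "'a::euclidean_space \<Rightarrow> real" where
  "std_gaussian_density z = (\<Prod>b\<in>Basis. exp (- (z \<bullet> b)\<^sup>2) / sqrt pi)"

lemma borel_measurable_std_gaussian_density [measurable]: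
  "std_gaussian_density \<in> borel_measurable borel"
  unfolding std_gaussian_density_def[abs_def] by measurable

lemma prob_space_std_gaussian:
  "prob_space (density lborel (\<lambda>z::'a::euclidean_space. ennreal (std_gaussian_density z)))"
proof
  have "(\<integral>\<^sup>+ z. ennreal (std_gaussian_density z) \<partial>(lborel :: 'a measure))
      = (\<integral>\<^sup>+ z. (\<Prod>b\<in>Basis. ennreal (exp (- 1 * (z \<bullet> b - 0)\<^sup>2) / sqrt pi)) \<partial>(lborel :: 'a measure))"
    unfolding std_gaussian_density_def by (intro nn_integral_cong) (simp add: prod_ennreal)
  also have "\<dots> = (\<Prod>b\<in>(Basis :: 'a set). \<integral>\<^sup>+ t. ennreal (exp (- 1 * (t - 0)\<^sup>2) / sqrt pi) \<partial>lborel)"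
    by (rule nn_integral_lborel_prod) auto
  also have "\<dots> = 1"
    using nn_integral_gaussian_normalized[of 1 0] by simp
  finally show "emeasure (density lborel (\<lambda>z::'a. ennreal (std_gaussian_density z)))
      (space (density lborel (\<lambda>z::'a. ennreal (std_gaussian_density z)))) = 1"
    by (subst emeasure_density) auto
qed

lemma norm_sq_Basis: "(norm x)\<^sup>2 = (\<Sum>b\<in>Basis. (x \<bullet> b)\<^sup>2)" for x :: "'a::euclidean_space"
  unfolding power2_norm_eq_inner by (subst euclidean_inner) (simp add: power2_eq_square)

lemma std_gaussian_density_eq:
  "std_gaussian_density z = exp (- (norm z)\<^sup>2) / sqrt pi ^ DIM('a)" for z :: "'a::euclidean_space"
  by (simp add: std_gaussian_density_def prod_dividef norm_sq_Basis exp_sum sum_negf[symmetric])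

lemma inner_sum_Basis_subset:
  fixes x :: "'a::euclidean_space \<Rightarrow> real"
  assumes "S \<subseteq> Basis" "b \<in> Basis"
  shows "(\<Sum>b'\<in>S. x b' *\<^sub>R b') \<bullet> b = (if b \<in> S then x b else 0)"
proof -
  have "finite S" using assms(1) by (rule finite_subset) simp
  moreover have "(\<Sum>b'\<in>S. x b' *\<^sub>R b') \<bullet> b = (\<Sum>b'\<in>S. if b' = b then x b else 0)"
    unfolding inner_sum_left inner_scaleR_left
    using assms by (intro sum.cong refl) (auto simp: inner_Basis)
  ultimately show ?thesis by (simp add: sum.delta')
qed

lemma inner_sum_Basis_split:
  fixes x y :: "'a::euclidean_space \<Rightarrow> real"
  assumes "S \<subseteq> Basis" "b \<in> Basis"
  shows "((\<Sum>b'\<in>Basis - S. x b' *\<^sub>R b') + (\<Sum>b'\<in>S. y b' *\<^sub>R b')) \<bullet> b = (if b \<in> S then y b else x b)"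
  using assms by (simp add: inner_add_left inner_sum_Basis_subset)

lemma norm_sum_Basis_diff_sq:
  fixes y :: "'a::euclidean_space \<Rightarrow> real"
  assumes S: "S \<subseteq> Basis" and W: "\<And>b. b \<in> Basis - S \<Longrightarrow> W \<bullet> b = 0"
  shows "(norm ((\<Sum>b\<in>S. y b *\<^sub>R b) - W))\<^sup>2 = (\<Sum>b\<in>S. (y b - W \<bullet> b)\<^sup>2)"
proof -
  have Basis: "(Basis :: 'a set) = (Basis - S) \<union> S" using S by blast
  have fin: "finite (Basis - S)" "finite S"
    using S by (auto intro: finite_subset)
  have coord_in: "((\<Sum>b'\<in>S. y b' *\<^sub>R b') - W) \<bullet> b = y b - W \<bullet> b" if "b \<in> S" for b
    using that S inner_sum_Basis_subset[OF S, of b y] by (auto simp: inner_diff_left)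
  have coord_out: "((\<Sum>b'\<in>S. y b' *\<^sub>R b') - W) \<bullet> b = 0" if "b \<in> Basis - S" for b
    using that S W by (simp add: inner_diff_left inner_sum_Basis_subset)
  have "(norm ((\<Sum>b\<in>S. y b *\<^sub>R b) - W))\<^sup>2 = (\<Sum>b\<in>(Basis - S) \<union> S. (((\<Sum>b'\<in>S. y b' *\<^sub>R b') - W) \<bullet> b)\<^sup>2)"
    by (subst Basis[symmetric]) (rule norm_sq_Basis)
  also have "\<dots> = (\<Sum>b\<in>S. (y b - W \<bullet> b)\<^sup>2)"
    using fin by (subst sum.union_disjoint) (auto simp: coord_in coord_out)
  finally show ?thesis .
qed

lemma nn_integral_lborel_split_Basis:
  fixes f :: "'a::euclidean_space \<Rightarrow> ennreal"
  assumes f: "f \<in> borel_measurable borel" and S: "S \<subseteq> Basis"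
  shows "(\<integral>\<^sup>+ z. f z \<partial>lborel) = (\<integral>\<^sup>+ x. \<integral>\<^sup>+ y. f ((\<Sum>b\<in>Basis - S. x b *\<^sub>R b) + (\<Sum>b\<in>S. y b *\<^sub>R b))
       \<partial>(\<Pi>\<^sub>M b\<in>S. lborel) \<partial>(\<Pi>\<^sub>M b\<in>Basis - S. lborel))"
proof -
  interpret product_sigma_finite "\<lambda>_::'a. lborel :: real measure" by standard
  define \<psi> where "\<psi> = (\<lambda>y. \<Sum>b\<in>Basis. y b *\<^sub>R b :: 'a)"
  have m\<psi>: "\<psi> \<in> borel_measurable (\<Pi>\<^sub>M b\<in>Basis. lborel)"
    unfolding \<psi>_def by measurable
  have fin: "finite (Basis - S)" "finite S"
    using S by (auto intro: finite_subset)
  have Basis: "(Basis :: 'a set) = (Basis - S) \<union> S" using S by blast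
  have merge: "\<psi> (merge (Basis - S) S (x, y)) = (\<Sum>b\<in>Basis - S. x b *\<^sub>R b) + (\<Sum>b\<in>S. y b *\<^sub>R b)" for x y
    unfolding \<psi>_def by (subst Basis, subst sum.union_disjoint) (use fin in \<open>auto simp: merge_def\<close>)
  have mf\<psi>: "(\<lambda>y. f (\<psi> y)) \<in> borel_measurable (\<Pi>\<^sub>M b\<in>(Basis - S) \<union> S. lborel)"
    using measurable_comp[OF m\<psi> f] unfolding Basis[symmetric] by (simp add: comp_def)
  have "(\<integral>\<^sup>+ z. f z \<partial>lborel) = (\<integral>\<^sup>+ z. f z \<partial>(distr (\<Pi>\<^sub>M b\<in>Basis. lborel) borel \<psi>))"
    unfolding \<psi>_def by (simp only: lborel_eq[where 'a='a, symmetric])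
  also have "\<dots> = (\<integral>\<^sup>+ y. f (\<psi> y) \<partial>(\<Pi>\<^sub>M b\<in>Basis. lborel))"
    using f by (intro nn_integral_distr m\<psi>) simp
  also have "\<dots> = (\<integral>\<^sup>+ y. f (\<psi> y) \<partial>(\<Pi>\<^sub>M b\<in>(Basis - S) \<union> S. lborel))"
    unfolding Basis[symmetric] ..
  also have "\<dots> = (\<integral>\<^sup>+ x. \<integral>\<^sup>+ y. f (\<psi> (merge (Basis - S) S (x, y))) \<partial>(\<Pi>\<^sub>M b\<in>S. lborel) \<partial>(\<Pi>\<^sub>M b\<in>Basis - S. lborel))"
    by (rule product_nn_integral_fold[OF _ fin mf\<psi>]) blast
  finally show ?thesis by (simp only: merge)
qed

lemma std_gaussian_density_split:
  fixes x y :: "'a::euclidean_space \<Rightarrow> real"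
  assumes S: "S \<subseteq> Basis"
  shows "std_gaussian_density ((\<Sum>b\<in>Basis - S. x b *\<^sub>R b) + (\<Sum>b\<in>S. y b *\<^sub>R b))
       = (\<Prod>b\<in>Basis - S. exp (- (x b)\<^sup>2) / sqrt pi) * (\<Prod>b\<in>S. exp (- (y b)\<^sup>2) / sqrt pi)"
proof -
  have Basis: "(Basis :: 'a set) = (Basis - S) \<union> S" using S by blast
  have fin: "finite (Basis - S)" "finite S"
    using S by (auto intro: finite_subset)
  have "((\<Sum>b'\<in>Basis - S. x b' *\<^sub>R b') + (\<Sum>b'\<in>S. y b' *\<^sub>R b')) \<bullet> b = x b" if "b \<in> Basis - S" for b
    using that S by (simp add: inner_sum_Basis_split)
  moreover have "((\<Sum>b'\<in>Basis - S. x b' *\<^sub>R b') + (\<Sum>b'\<in>S. y b' *\<^sub>R b')) \<bullet> b = y b" if "b \<in> S" for b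
    using that S inner_sum_Basis_split[OF S, of b x y] by auto
  ultimately show ?thesis
    unfolding std_gaussian_density_def
    by (subst Basis, subst prod.union_disjoint) (use fin in \<open>auto intro!: arg_cong2[where f="(*)"] prod.cong\<close>)
qed

lemma nn_integral_PiM_gaussian_iterated:
  fixes c :: "('i \<Rightarrow> real) \<Rightarrow> 'i \<Rightarrow> real"
  assumes I: "finite I" and J: "finite J" and \<alpha>: "\<alpha> > 0"
  shows "(\<integral>\<^sup>+ x. \<integral>\<^sup>+ y. (\<Prod>i\<in>I. ennreal (exp (- (x i)\<^sup>2) / sqrt pi))
            * (\<Prod>j\<in>J. ennreal (exp (- \<alpha> * (y j - c x j)\<^sup>2) / sqrt pi)) \<partial>(\<Pi>\<^sub>M j\<in>J. lborel) \<partial>(\<Pi>\<^sub>M i\<in>I. lborel))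
       = ennreal (1 / sqrt \<alpha>) ^ card J"
proof -
  have "(\<integral>\<^sup>+ y. (\<Prod>i\<in>I. ennreal (exp (- (x i)\<^sup>2) / sqrt pi))
            * (\<Prod>j\<in>J. ennreal (exp (- \<alpha> * (y j - c x j)\<^sup>2) / sqrt pi)) \<partial>(\<Pi>\<^sub>M j\<in>J. lborel))
      = (\<Prod>i\<in>I. ennreal (exp (- 1 * (x i - 0)\<^sup>2) / sqrt pi)) * ennreal (1 / sqrt \<alpha>) ^ card J" for x
  proof -
    have "(\<lambda>y. \<Prod>j\<in>J. ennreal (exp (- \<alpha> * (y j - c x j)\<^sup>2) / sqrt pi)) \<in> borel_measurable (\<Pi>\<^sub>M j\<in>J. lborel)"
      by measurable
    then show ?thesis
      using nn_integral_PiM_gaussian[OF J \<alpha>, of "c x"] by (simp add: nn_integral_cmult)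
  qed
  moreover have "(\<lambda>x. \<Prod>i\<in>I. ennreal (exp (- 1 * (x i - 0)\<^sup>2) / sqrt pi)) \<in> borel_measurable (\<Pi>\<^sub>M i\<in>I. lborel)"
    by measurable
  ultimately show ?thesis
    using nn_integral_PiM_gaussian[OF I, of 1 "\<lambda>_. 0"] by (simp add: nn_integral_multc)
qed

text \<open>Given the coordinates outside \<open>S\<close>, \<open>F\<close> is a product of one-dimensional Gaussian bumps in
  the coordinates in \<open>S\<close>; bounding the Gaussian weight on \<open>S\<close> by \<open>1 / \<surd>\<pi>\<close> leaves integrals of mass
  \<open>1 / \<surd>\<alpha>\<close> each, while the remaining weight integrates to \<open>1\<close>.\<close>

lemma nn_integral_std_gaussian_bump_le:
  fixes F :: "'a::euclidean_space \<Rightarrow> real" and c :: "('a \<Rightarrow> real) \<Rightarrow> 'a \<Rightarrow> real"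
  assumes S: "S \<subseteq> Basis" and \<alpha>: "\<alpha> > 0" and F: "F \<in> borel_measurable borel"
    and F_eq: "\<And>x y. F ((\<Sum>b\<in>Basis - S. x b *\<^sub>R b) + (\<Sum>b\<in>S. y b *\<^sub>R b))
                    = (\<Prod>b\<in>S. exp (- \<alpha> * (y b - c x b)\<^sup>2))"
  shows "(\<integral>\<^sup>+ z. ennreal (F z) \<partial>density lborel (\<lambda>z. ennreal (std_gaussian_density z)))
       \<le> ennreal (1 / sqrt \<alpha>) ^ card S"
proof -
  have fin: "finite (Basis - S)" "finite S"
    using S by (auto intro: finite_subset)
  have pointwise: "ennreal (std_gaussian_density z * F z)
      \<le> (\<Prod>b\<in>Basis - S. ennreal (exp (- (x b)\<^sup>2) / sqrt pi))
        * (\<Prod>b\<in>S. ennreal (exp (- \<alpha> * (y b - c x b)\<^sup>2) / sqrt pi))"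
    if z: "z = (\<Sum>b\<in>Basis - S. x b *\<^sub>R b) + (\<Sum>b\<in>S. y b *\<^sub>R b)" for x y z
  proof -
    have "(\<Prod>b\<in>S. exp (- (y b)\<^sup>2) / sqrt pi) * F z \<le> (\<Prod>b\<in>S. 1 / sqrt pi) * F z"
      by (intro mult_right_mono prod_mono) (auto simp: z F_eq prod_nonneg divide_right_mono)
    also have "\<dots> = (\<Prod>b\<in>S. exp (- \<alpha> * (y b - c x b)\<^sup>2) / sqrt pi)"
      by (simp add: z F_eq prod_dividef power_one_over)
    finally have "std_gaussian_density z * F z
        \<le> (\<Prod>b\<in>Basis - S. exp (- (x b)\<^sup>2) / sqrt pi) * (\<Prod>b\<in>S. exp (- \<alpha> * (y b - c x b)\<^sup>2) / sqrt pi)"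
      unfolding z std_gaussian_density_split[OF S]
      by (simp add: mult.assoc mult_left_mono prod_nonneg)
    then show ?thesis
      by (simp add: prod_ennreal ennreal_mult[symmetric] prod_nonneg ennreal_leI)
  qed
  have "(\<integral>\<^sup>+ z. ennreal (F z) \<partial>density lborel (\<lambda>z. ennreal (std_gaussian_density z)))
      = (\<integral>\<^sup>+ z. ennreal (std_gaussian_density z * F z) \<partial>lborel)"
    using F by (subst nn_integral_density)
      (auto intro!: nn_integral_cong simp: ennreal_mult' std_gaussian_density_def prod_nonneg)
  also have "\<dots> = (\<integral>\<^sup>+ x. \<integral>\<^sup>+ y. ennreal (std_gaussian_density ((\<Sum>b\<in>Basis - S. x b *\<^sub>R b) + (\<Sum>b\<in>S. y b *\<^sub>R b))
        * F ((\<Sum>b\<in>Basis - S. x b *\<^sub>R b) + (\<Sum>b\<in>S. y b *\<^sub>R b))) \<partial>(\<Pi>\<^sub>M b\<in>S. lborel) \<partial>(\<Pi>\<^sub>M b\<in>Basis - S. lborel))"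
    using F S by (intro nn_integral_lborel_split_Basis) auto
  also have "\<dots> \<le> (\<integral>\<^sup>+ x. \<integral>\<^sup>+ y. (\<Prod>b\<in>Basis - S. ennreal (exp (- (x b)\<^sup>2) / sqrt pi))
        * (\<Prod>b\<in>S. ennreal (exp (- \<alpha> * (y b - c x b)\<^sup>2) / sqrt pi)) \<partial>(\<Pi>\<^sub>M b\<in>S. lborel) \<partial>(\<Pi>\<^sub>M b\<in>Basis - S. lborel))"
    by (intro nn_integral_mono pointwise refl)
  also have "\<dots> = ennreal (1 / sqrt \<alpha>) ^ card S"
    by (rule nn_integral_PiM_gaussian_iterated[OF fin \<alpha>])
  finally show ?thesis .
qed

lemma emeasure_lborel_eq_nn_integral_translate:
  fixes S :: "'a::euclidean_space set"
  assumes S: "S \<in> sets borel"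
  shows "emeasure lborel S = (\<integral>\<^sup>+ z. indicator S (z + a) \<partial>lborel)"
proof -
  have shift: "(\<lambda>z. a + z) \<in> borel_measurable (borel :: 'a measure)"
    by measurable
  have "emeasure lborel S = emeasure (distr lborel borel ((+) a)) S"
    by (simp add: lborel_distr_plus)
  also have "\<dots> = emeasure lborel ((+) a -` S)"
    using S by (subst emeasure_distr) auto
  also have "\<dots> = (\<integral>\<^sup>+ z. indicator ((+) a -` S) z \<partial>lborel)"
    using measurable_sets[OF shift S] by (intro nn_integral_indicator[symmetric]) simp
  also have "\<dots> = (\<integral>\<^sup>+ z. indicator S (z + a) \<partial>lborel)"
    by (simp add: indicator_def add.commute)
  finally show ?thesis .
qed

lemma null_sets_lborel_of_null_lines:
  fixes S :: "'a::euclidean_space set" and u :: 'a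
  assumes S: "S \<in> sets borel" and lines: "\<And>z. {t::real. z + t *\<^sub>R u \<in> S} \<in> null_sets lborel"
  shows "S \<in> null_sets lborel"
proof -
  have "(\<lambda>(t, z). indicator {0..1::real} t * indicator S (z + t *\<^sub>R u) :: ennreal)
      \<in> borel_measurable ((lborel :: real measure) \<Otimes>\<^sub>M (lborel :: 'a measure))"
    using S by measurable
  from pair_sigma_finite.Fubini'[OF _ this] have Fubini:
    "(\<integral>\<^sup>+ t. \<integral>\<^sup>+ z. indicator {0..1} t * indicator S (z + t *\<^sub>R u) \<partial>lborel \<partial>lborel)
      = (\<integral>\<^sup>+ z. \<integral>\<^sup>+ t. indicator {0..1::real} t * indicator S (z + t *\<^sub>R u) \<partial>lborel \<partial>(lborel :: 'a measure))"
    by (simp add: pair_sigma_finite.intro sigma_finite_lborel)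
  have "emeasure lborel S = (\<integral>\<^sup>+ t. indicator {0..1::real} t * emeasure lborel S \<partial>lborel)"
    by (simp add: nn_integral_multc)
  also have "\<dots> = (\<integral>\<^sup>+ t. \<integral>\<^sup>+ z. indicator {0..1} t * indicator S (z + t *\<^sub>R u) \<partial>lborel \<partial>lborel)"
  proof (intro nn_integral_cong)
    fix t :: real
    have "(\<lambda>z. indicator S (z + t *\<^sub>R u) :: ennreal) \<in> borel_measurable lborel"
      using S by measurable
    then show "indicator {0..1} t * emeasure lborel S
        = (\<integral>\<^sup>+ z. indicator {0..1} t * indicator S (z + t *\<^sub>R u) \<partial>lborel)"
      by (simp add: nn_integral_cmult emeasure_lborel_eq_nn_integral_translate[OF S, of "t *\<^sub>R u"])
  qed
  also have "\<dots> = (\<integral>\<^sup>+ z. \<integral>\<^sup>+ t. indicator {0..1::real} t * indicator S (z + t *\<^sub>R u) \<partial>lborel \<partial>lborel)"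
    by (rule Fubini)
  also have "\<dots> = (\<integral>\<^sup>+ z. 0 \<partial>(lborel :: 'a measure))"
  proof (rule nn_integral_cong)
    fix z :: 'a
    have "(\<integral>\<^sup>+ t. indicator {0..1::real} t * indicator S (z + t *\<^sub>R u) \<partial>lborel)
        \<le> (\<integral>\<^sup>+ t. indicator {t. z + t *\<^sub>R u \<in> S} t \<partial>lborel)"
      by (intro nn_integral_mono) (auto simp: indicator_def)
    also have "\<dots> = 0"
      using lines[of z] by (subst nn_integral_indicator) auto
    finally show "(\<integral>\<^sup>+ t. indicator {0..1::real} t * indicator S (z + t *\<^sub>R u) \<partial>lborel) = 0"
      by simp
  qed
  finally show ?thesis
    using S by (simp add: null_sets_def)
qed

section \<open>Complex matrices\<close>

lemma norm_sq_vec: "(norm x)\<^sup>2 = (\<Sum>i\<in>UNIV. (norm (x$i))\<^sup>2)" for x :: "'a::real_normed_vector^'n::finite"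
  by (simp only: norm_vec_def[of x] L2_set_def) (simp add: sum_nonneg)

lemma norm_mult_vec_add_column:
  fixes R C :: "complex^'m::finite^'n::finite" and v :: "complex^'m" and k :: "complex^'n"
  assumes vl: "v$l \<noteq> 0" and C: "\<And>i j. j \<noteq> l \<Longrightarrow> C$i$j = 0"
  shows "norm ((R + C) *v v + k)
       = cmod (v$l) * norm (C - (\<chi> i j. if j = l then - ((R *v v)$i + k$i) / v$l else 0))"
proof -
  define Z :: "complex^'m^'n" where "Z = (\<chi> i j. if j = l then - ((R *v v)$i + k$i) / v$l else 0)"
  have CZ: "(C - Z)$i$j = 0" if "j \<noteq> l" for i j
    using C[OF that] that by (simp add: Z_def)
  have Cv: "(C *v v)$i = C$i$l * v$l" for i
    unfolding matrix_vector_mult_def using C by (simp add: sum.remove[of UNIV l])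
  have comp: "((R + C) *v v + k)$i = v$l * (C - Z)$i$l" for i
    using vl by (simp add: matrix_vector_mult_add_rdistrib Cv Z_def field_simps)
  have row: "(norm ((C - Z)$i))\<^sup>2 = (cmod ((C - Z)$i$l))\<^sup>2" for i
    unfolding norm_sq_vec using CZ by (simp add: sum.remove[of UNIV l])
  have "(norm ((R + C) *v v + k))\<^sup>2 = (\<Sum>i\<in>UNIV. (norm (v$l * (C - Z)$i$l))\<^sup>2)"
    unfolding norm_sq_vec[of "(R + C) *v v + k"] comp ..
  also have "\<dots> = (cmod (v$l))\<^sup>2 * (\<Sum>i\<in>UNIV. (norm ((C - Z)$i))\<^sup>2)"
    by (simp only: row norm_mult power_mult_distrib sum_distrib_left)
  also have "\<dots> = (cmod (v$l) * norm (C - Z))\<^sup>2"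
    by (simp only: norm_sq_vec[of "C - Z", symmetric] power_mult_distrib)
  finally have "(norm ((R + C) *v v + k))\<^sup>2 = (cmod (v$l) * norm (C - Z))\<^sup>2" .
  then show ?thesis
    unfolding Z_def[symmetric] by (rule power2_eq_imp_eq) auto
qed

lemma right_invertible_of_rank:
  fixes D :: "'a::field^'n::finite^'m::finite"
  assumes rank: "rank D = CARD('m)"
  shows "\<exists>R. D ** R = mat 1"
  unfolding matrix_right_invertible_independent_rows
proof (intro allI impI)
  fix c i0 assume sum: "(\<Sum>i\<in>UNIV. c i *s row i D) = 0"
  show "c i0 = 0"
  proof (rule ccontr)
    assume ci0: "c i0 \<noteq> 0"
    define W where "W = (\<lambda>i. row i D) ` (UNIV - {i0})"
    have "c i0 *s row i0 D + (\<Sum>i\<in>UNIV - {i0}. c i *s row i D) = 0"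
      using sum by (simp add: sum.remove[of UNIV i0])
    then have row_i0: "row i0 D = (- inverse (c i0)) *s (\<Sum>i\<in>UNIV - {i0}. c i *s row i D)"
      using ci0 by (simp add: vector_smult_assoc add_eq_0_iff2 vec_eq_iff field_simps)
    have other_rows: "row i D \<in> vec.span W" if "i \<noteq> i0" for i
      using that unfolding W_def by (intro vec.span_base) auto
    then have "row i0 D \<in> vec.span W"
      unfolding row_i0 by (intro vec.span_scale vec.span_sum) (auto intro: vec.span_scale)
    with other_rows have "row i D \<in> vec.span W" for i
      by (cases "i = i0") auto
    then have "rows D \<subseteq> vec.span W"
      unfolding rows_def by blast
    then have "vec.dim (rows D) \<le> card W"
      by (rule vec.dim_le_card) (simp add: W_def)
    also have "\<dots> \<le> card (UNIV - {i0})"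
      unfolding W_def by (rule card_image_le) simp
    also have "\<dots> < CARD('m)"
      by (simp add: card_Diff_singleton)
    finally show False
      using rank unfolding row_rank_def_gen by simp
  qed
qed

lemma right_inverse_nonzero:
  fixes D :: "'a::semiring_1^'n::finite^'m::finite" and R :: "'a^'m^'n"
  assumes "D ** R = mat 1"
  shows "R \<noteq> 0"
proof
  assume "R = 0"
  then have "(mat 1 :: 'a^'m^'m) $ undefined $ undefined = 0"
    using assms by simp
  then show False by (simp add: mat_def)
qed

lemma matrix_vector_mult_axis_one: "A *v axis j 1 = column j A"
  for A :: "'a::semiring_1^'n::finite^'m::finite"
  by (simp add: vec_eq_iff matrix_vector_mult_def column_def axis_def if_distrib cong: if_cong)

lemma mult_column_right_inverse:
  fixes H :: "'a::comm_semiring_1^'k::finite^'n::finite" and W :: "'a^'m::finite^'k"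
    and D :: "'a^'t::finite^'m" and R :: "'a^'m^'t"
  assumes "D ** R = mat 1"
  shows "(H ** W ** D) *v column j R = H *v column j W"
proof -
  have "(H ** W ** D) *v column j R = ((H ** W) ** (D ** R)) *v axis j 1"
    by (simp add: matrix_vector_mult_axis_one[symmetric] matrix_vector_mul_assoc matrix_mul_assoc)
  also have "\<dots> = H *v column j W"
    by (simp add: assms matrix_vector_mult_axis_one[symmetric] matrix_vector_mul_assoc)
  finally show ?thesis .
qed

lemma norm_sq_mat:
  "(norm X)\<^sup>2 = (\<Sum>i\<in>UNIV. \<Sum>j\<in>UNIV. (cmod (X$i$j))\<^sup>2)" for X :: "complex^'n::finite^'m::finite"
  by (simp add: norm_sq_vec)

lemma norm_column_le: "norm (column j R) \<le> norm R"
  for R :: "complex^'m::finite^'t::finite"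
proof -
  have "(norm (column j R))\<^sup>2 \<le> (norm R)\<^sup>2"
    unfolding norm_sq_vec[of "column j R"] norm_sq_mat
    by (intro sum_mono) (auto simp: column_def intro!: member_le_sum)
  then show ?thesis by (simp add: power2_le_iff_abs_le)
qed

lemma norm_matrix_vector_mult_le: "norm (X *v u) \<le> norm X * norm u"
  for X :: "complex^'t::finite^'m::finite" and u :: "complex^'t"
proof -
  have row: "norm ((X *v u)$i) \<le> norm (X$i) * norm u" for i
  proof -
    have "norm ((X *v u)$i) = norm (\<Sum>t\<in>UNIV. X$i$t * u$t)"
      by (simp add: matrix_vector_mult_def)
    also have "\<dots> \<le> (\<Sum>t\<in>UNIV. \<bar>cmod (X$i$t)\<bar> * \<bar>cmod (u$t)\<bar>)"
      by (rule order_trans[OF norm_sum]) (simp add: norm_mult)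
    also have "\<dots> \<le> L2_set (\<lambda>t. cmod (X$i$t)) UNIV * L2_set (\<lambda>t. cmod (u$t)) UNIV"
      by (rule L2_set_mult_ineq)
    also have "\<dots> = norm (X$i) * norm u"
      by (simp add: norm_vec_def)
    finally show ?thesis .
  qed
  have "(norm (X *v u))\<^sup>2 \<le> (\<Sum>i\<in>UNIV. (norm (X$i) * norm u)\<^sup>2)"
    unfolding norm_sq_vec[of "X *v u"] by (intro sum_mono power_mono row) simp
  also have "\<dots> = (norm X * norm u)\<^sup>2"
    by (simp add: power_mult_distrib sum_distrib_right[symmetric] norm_sq_vec[of X])
  finally show ?thesis by (simp add: power2_le_iff_abs_le)
qed

lemma scaleR_matrix_vector_mult:
  fixes A :: "complex^'n::finite^'m::finite"
  shows "(c *\<^sub>R A) *v x = c *\<^sub>R (A *v x)" and "A *v (c *\<^sub>R x) = c *\<^sub>R (A *v x)"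
  by (simp_all add: vec_eq_iff matrix_vector_mult_def scaleR_sum_right)

lemma norm_mult_column_right_inverse_le:
  fixes H W :: "complex^'m::finite^'m" and D K :: "complex^'t::finite^'m" and R :: "complex^'m^'t"
  assumes "D ** R = mat 1"
  shows "norm (H *v (c *\<^sub>R column j W) + K *v column j R) \<le> norm (c *\<^sub>R (H ** W ** D) + K) * norm R"
proof -
  have "H *v (c *\<^sub>R column j W) + K *v column j R = (c *\<^sub>R (H ** W ** D) + K) *v column j R"
    using mult_column_right_inverse[OF assms, of H W j]
    by (simp add: matrix_vector_mult_add_rdistrib scaleR_matrix_vector_mult)
  also have "norm \<dots> \<le> norm (c *\<^sub>R (H ** W ** D) + K) * norm R"
    using norm_matrix_vector_mult_le[of "c *\<^sub>R (H ** W ** D) + K" "column j R"] norm_column_le[of j R]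
    by (simp add: order_trans mult_left_mono)
  finally show ?thesis .
qed

lemma exists_large_entry:
  fixes W :: "complex^'n::finite^'m::finite"
  shows "\<exists>i j. (norm W)\<^sup>2 \<le> real (CARD('m) * CARD('n)) * (cmod (W$i$j))\<^sup>2"
proof (rule ccontr)
  assume "\<not> ?thesis"
  then have "(cmod (W$i$j))\<^sup>2 < (norm W)\<^sup>2 / real (CARD('m) * CARD('n))" for i j
    by (simp add: not_le field_simps)
  then have "(norm W)\<^sup>2 < (\<Sum>i\<in>(UNIV::'m set). \<Sum>j\<in>(UNIV::'n set). (norm W)\<^sup>2 / real (CARD('m) * CARD('n)))"
    unfolding norm_sq_mat[of W] by (intro sum_strict_mono) auto
  then show False by simp
qed

lemma Re_trace_mult_conj_transpose: "Re (trace (A ** conj_transpose A)) = (norm A)\<^sup>2"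
  for A :: "complex^'m::finite^'m"
proof -
  have "(A ** conj_transpose A)$i$i = (\<Sum>k\<in>UNIV. A$i$k * cnj (A$i$k))" for i
    by (simp add: matrix_matrix_mult_def conj_transpose_def)
  then show ?thesis
    by (simp add: trace_def Re_sum complex_mult_cnj cmod_power2 norm_sq_mat)
qed

lemma norm_precoder:
  fixes H :: "complex^'m::finite^'m"
  assumes "invertible H"
  shows "norm (precoder H) = 1"
proof -
  have "H ** cinv H = mat 1"
    using assms unfolding cinv_def invertible_def matrix_inv_def by (auto intro: someI2_ex)
  then have "norm (cinv H) > 0"
    using right_inverse_nonzero by auto
  then show ?thesis
    unfolding precoder_def Re_trace_mult_conj_transpose by simp
qed

lemma invertible_add_mat_of_large:
  fixes H :: "complex^'m::finite^'m"
  assumes large: "(\<Sum>i\<in>UNIV. \<Sum>j\<in>UNIV. cmod (H$i$j)) < cmod t"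
  shows "invertible (H + mat t)"
  unfolding invertible_left_inverse matrix_left_invertible_ker
proof (intro allI impI)
  fix x :: "complex^'m" assume ker: "(H + mat t) *v x = 0"
  define m where "m = Max (range (\<lambda>j. cmod (x$j)))"
  have "m \<in> range (\<lambda>j. cmod (x$j))"
    unfolding m_def by (rule Max_in) auto
  then obtain i where i: "cmod (x$i) = m"
    by auto
  have max: "cmod (x$j) \<le> cmod (x$i)" for j
    unfolding i m_def by (rule Max_ge) auto
  have "(mat t *v x)$i = (\<Sum>j\<in>UNIV. (if i = j then t else 0) * x$j)"
    by (simp add: matrix_vector_mult_def mat_def)
  also have "\<dots> = (\<Sum>j\<in>UNIV. if j = i then t * x$j else 0)"
    by (rule sum.cong) auto
  finally have mat_t: "(mat t *v x)$i = t * x$i"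
    by simp
  have "(H *v x)$i + (mat t *v x)$i = 0"
    using ker by (simp add: matrix_vector_mult_add_rdistrib vec_eq_iff)
  then have "(H *v x)$i = - (t * x$i)"
    unfolding mat_t by (simp add: eq_neg_iff_add_eq_0)
  then have "cmod t * cmod (x$i) = cmod (\<Sum>j\<in>UNIV. H$i$j * x$j)"
    by (simp add: matrix_vector_mult_def norm_mult)
  also have "\<dots> \<le> (\<Sum>j\<in>UNIV. cmod (H$i$j) * cmod (x$i))"
  proof (rule order_trans[OF norm_sum sum_mono])
    show "norm (H$i$j * x$j) \<le> cmod (H$i$j) * cmod (x$i)" for j
      by (simp add: norm_mult mult_left_mono max)
  qed
  also have "\<dots> \<le> (\<Sum>i\<in>UNIV. \<Sum>j\<in>UNIV. cmod (H$i$j)) * cmod (x$i)"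
    unfolding sum_distrib_right[symmetric]
    by (intro mult_right_mono member_le_sum) (auto intro: sum_nonneg)
  finally have "(cmod t - (\<Sum>i\<in>UNIV. \<Sum>j\<in>UNIV. cmod (H$i$j))) * cmod (x$i) \<le> 0"
    by (simp add: algebra_simps)
  then have xi: "cmod (x$i) \<le> 0"
    using large by (simp add: mult_le_0_iff)
  have "x$j = 0" for j
    using max[of j] xi by simp
  then show "x = 0"
    by (simp add: vec_eq_iff)
qed

lemma det_add_mat_poly:
  fixes H :: "complex^'m::finite^'m"
  shows "\<exists>p. p \<noteq> 0 \<and> (\<forall>z. det (H + mat z) = poly p z)"
proof -
  define p where "p = (\<Sum>\<pi>\<in>{\<pi>. \<pi> permutes (UNIV::'m set)}. [:of_int (sign \<pi>):] *
      (\<Prod>i\<in>UNIV. [:H$i$(\<pi> i), if \<pi> i = i then 1 else 0:]))"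
  have det: "det (H + mat z) = poly p z" for z
    unfolding det_def p_def poly_sum poly_mult poly_prod
    by (intro sum.cong refl arg_cong2[where f="(*)"] prod.cong) (auto simp: mat_def)
  define t where "t = (\<Sum>i\<in>UNIV. \<Sum>j\<in>UNIV. cmod (H$i$j)) + 1"
  have "(\<Sum>i\<in>UNIV. \<Sum>j\<in>UNIV. cmod (H$i$j)) < t" "0 \<le> t"
    by (simp_all add: t_def sum_nonneg)
  then have "invertible (H + mat (complex_of_real t))"
    by (intro invertible_add_mat_of_large) simp
  then have "p \<noteq> 0"
    by (auto simp: invertible_det_nz det)
  with det show ?thesis by blast
qed

lemma finite_singular_on_line:
  fixes H :: "complex^'m::finite^'m"
  shows "finite {t::real. det (H + t *\<^sub>R mat 1) = 0}"
proof -
  obtain p where p: "p \<noteq> 0" "\<And>z. det (H + mat z) = poly p z"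
    using det_add_mat_poly by blast
  have "t *\<^sub>R (mat 1 :: complex^'m^'m) = mat (complex_of_real t)" for t
    by (auto simp: vec_eq_iff mat_def of_real_def)
  then have "{t::real. det (H + t *\<^sub>R mat 1) = 0} = complex_of_real -` {z. poly p z = 0}"
    by (auto simp: p(2))
  also have "finite \<dots>"
    using poly_roots_finite[OF p(1)] inj_of_real by (intro finite_vimageI) auto
  finally show ?thesis .
qed

section \<open>Gaussian matrices\<close>

text \<open>The real coordinates of the \<open>l\<close>-th column: real and imaginary parts of its \<open>CARD('m)\<close> entries.\<close>

definition column_Basis :: "'n::finite \<Rightarrow> (complex^'n^'m::finite) set" where
  "column_Basis l = {b\<in>Basis. \<forall>i j. j \<noteq> l \<longrightarrow> b$i$j = 0}"

lemma Basis_matrix_iff: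
  "b \<in> (Basis :: (complex^'n::finite^'m::finite) set) \<longleftrightarrow> (\<exists>i j w. w \<in> {1, \<i>} \<and> b = axis i (axis j w))"
  by (auto simp: Basis_vec_def Basis_complex_def)

lemma column_Basis_subset: "column_Basis l \<subseteq> Basis"
  by (auto simp: column_Basis_def)

lemma column_Basis_eq:
  "column_Basis l = (\<lambda>(i, w). axis i (axis l w)) ` (UNIV \<times> {1, \<i>})"
proof (intro set_eqI iffI)
  fix b assume "b \<in> column_Basis l"
  then obtain i j w where b: "w \<in> {1, \<i>}" "b = axis i (axis j w)"
    and zero: "\<forall>i j. j \<noteq> l \<longrightarrow> b$i$j = 0"
    unfolding column_Basis_def Basis_matrix_iff by blast
  have "j = l"
  proof (rule ccontr)
    assume "j \<noteq> l"
    then have "b$i$j = 0" using zero by blast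
    then show False using b by auto
  qed
  then show "b \<in> (\<lambda>(i, w). axis i (axis l w)) ` (UNIV \<times> {1, \<i>})" using b by auto
next
  fix b assume "b \<in> (\<lambda>(i, w). axis i (axis l w)) ` (UNIV \<times> {1, \<i>})"
  then obtain i w where b: "w \<in> {1, \<i>}" "b = axis i (axis l w)" by auto
  then have "b \<in> Basis" unfolding Basis_matrix_iff by blast
  then show "b \<in> column_Basis l"
    using b by (simp add: column_Basis_def axis_def)
qed

lemma card_column_Basis: "card (column_Basis l :: (complex^'n::finite^'m::finite) set) = 2 * CARD('m)"
proof -
  have "inj_on (\<lambda>(i, w). axis i (axis l w) :: complex^'n^'m) (UNIV \<times> {1, \<i>})"
  proof (rule inj_onI, clarify)
    fix i w i' w' assume w: "w \<in> {1, \<i>}" "w' \<in> {1, \<i>}"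
      and eq: "(axis i (axis l w) :: complex^'n^'m) = axis i' (axis l w')"
    have "axis l w \<noteq> 0" using w(1) by (auto simp: vec_eq_iff axis_def)
    with eq show "i = i' \<and> w = w'" unfolding axis_eq_axis by auto
  qed
  then show ?thesis
    unfolding column_Basis_eq by (simp add: card_image card_cartesian_product)
qed

lemma inner_Basis_outside_column:
  fixes Z :: "complex^'n::finite^'m::finite"
  assumes "b \<in> Basis - column_Basis l" "\<And>i j. j \<noteq> l \<Longrightarrow> Z$i$j = 0"
  shows "Z \<bullet> b = 0"
proof -
  have "b \<in> Basis" using assms(1) by blast
  then obtain i j w where b: "w \<in> {1, \<i>}" "b = axis i (axis j w)"
    unfolding Basis_matrix_iff by blast
  have "j \<noteq> l"
  proof
    assume "j = l"
    then have "b \<in> column_Basis l"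
      unfolding column_Basis_eq using b by (intro image_eqI[where x="(i, w)"]) auto
    then show False using assms(1) by blast
  qed
  have "Z \<bullet> b = (Z$i$j) \<bullet> w" unfolding b(2) by (simp add: inner_axis)
  then show ?thesis
    using assms(2) \<open>j \<noteq> l\<close> by simp
qed

lemma sum_column_Basis_nth:
  fixes y :: "complex^'n::finite^'m::finite \<Rightarrow> real"
  assumes "j \<noteq> l"
  shows "(\<Sum>b\<in>column_Basis l. y b *\<^sub>R b) $ i $ j = 0"
  using assms by (auto simp: column_Basis_def intro!: sum.neutral)

lemma cgauss_mat_eq_std_gaussian:
  "cgauss_mat = density lborel (\<lambda>H::complex^'m::finite^'m. ennreal (std_gaussian_density H))"
proof -
  have "sqrt pi ^ DIM(complex^'m^'m) = (sqrt pi ^ 2) ^ (CARD('m) * CARD('m))"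
    unfolding power_mult[symmetric] by (simp add: ac_simps)
  then have "sqrt pi ^ DIM(complex^'m^'m) = pi ^ (CARD('m) * CARD('m))"
    by simp
  then show ?thesis
    unfolding cgauss_mat_def std_gaussian_density_eq by simp
qed

lemma prob_space_cgauss_mat: "prob_space (cgauss_mat :: (complex^'m::finite^'m) measure)"
  unfolding cgauss_mat_eq_std_gaussian by (rule prob_space_std_gaussian)

lemma nn_integral_cgauss_exp_le:
  fixes v k :: "complex^'m::finite" and a :: real
  assumes a: "a > 0" and vl: "v$l \<noteq> 0"
  shows "(\<integral>\<^sup>+ H. ennreal (exp (- a * (norm (H *v v + k))\<^sup>2)) \<partial>(cgauss_mat :: (complex^'m^'m) measure))
       \<le> ennreal ((1 / (a * (cmod (v$l))\<^sup>2)) ^ CARD('m))"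
proof -
  define \<alpha> where "\<alpha> = a * (cmod (v$l))\<^sup>2"
  have \<alpha>: "\<alpha> > 0" using a vl by (simp add: \<alpha>_def)
  define S :: "(complex^'m^'m) set" where "S = column_Basis l"
  define Z :: "(complex^'m^'m \<Rightarrow> real) \<Rightarrow> complex^'m^'m" where
    "Z x = (\<chi> i j. if j = l then - (((\<Sum>b\<in>Basis - S. x b *\<^sub>R b) *v v)$i + k$i) / v$l else 0)" for x
  have meas: "(\<lambda>H::complex^'m^'m. exp (- a * (norm (H *v v + k))\<^sup>2)) \<in> borel_measurable borel"
  proof (rule borel_measurable_continuous_onI)
    have "continuous_on UNIV (\<lambda>H::complex^'m^'m. H *v v)"
      unfolding matrix_vector_mult_def by (intro continuous_intros)
    then show "continuous_on UNIV (\<lambda>H::complex^'m^'m. exp (- a * (norm (H *v v + k))\<^sup>2))"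
      by (intro continuous_intros)
  qed
  have "exp (- a * (norm (((\<Sum>b\<in>Basis - S. x b *\<^sub>R b) + (\<Sum>b\<in>S. y b *\<^sub>R b)) *v v + k))\<^sup>2)
      = (\<Prod>b\<in>S. exp (- \<alpha> * (y b - Z x \<bullet> b)\<^sup>2))" for x y
  proof -
    have "(norm (((\<Sum>b\<in>Basis - S. x b *\<^sub>R b) + (\<Sum>b\<in>S. y b *\<^sub>R b)) *v v + k))\<^sup>2
        = (cmod (v$l))\<^sup>2 * (norm ((\<Sum>b\<in>S. y b *\<^sub>R b) - Z x))\<^sup>2"
      unfolding Z_def S_def
      by (subst norm_mult_vec_add_column[OF vl sum_column_Basis_nth]) (auto simp: power_mult_distrib)
    also have "(norm ((\<Sum>b\<in>S. y b *\<^sub>R b) - Z x))\<^sup>2 = (\<Sum>b\<in>S. (y b - Z x \<bullet> b)\<^sup>2)"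
      unfolding S_def
      by (rule norm_sum_Basis_diff_sq[OF column_Basis_subset inner_Basis_outside_column])
        (auto simp: Z_def)
    moreover have "finite S"
      unfolding S_def using column_Basis_subset by (rule finite_subset) simp
    ultimately show ?thesis
      by (simp add: \<alpha>_def exp_sum sum_distrib_left mult.assoc)
  qed
  then have "(\<integral>\<^sup>+ H. ennreal (exp (- a * (norm (H *v v + k))\<^sup>2)) \<partial>(cgauss_mat :: (complex^'m^'m) measure))
      \<le> ennreal (1 / sqrt \<alpha>) ^ card S"
    unfolding cgauss_mat_eq_std_gaussian S_def
    by (intro nn_integral_std_gaussian_bump_le[OF column_Basis_subset \<alpha> meas]) (simp add: S_def)
  also have "\<dots> = ennreal ((1 / \<alpha>) ^ CARD('m))"
    using \<alpha> by (simp add: S_def card_column_Basis ennreal_power power_mult power_divide)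
  finally show ?thesis by (simp add: \<alpha>_def)
qed

lemma null_sets_singular: "{H::complex^'m::finite^'m. det H = 0} \<in> null_sets lborel"
proof (rule null_sets_lborel_of_null_lines)
  have "continuous_on UNIV (det :: complex^'m^'m \<Rightarrow> complex)"
    unfolding det_def[abs_def] by (intro continuous_intros)
  then have "det \<in> borel_measurable (borel :: (complex^'m^'m) measure)"
    by (rule borel_measurable_continuous_onI)
  then show "{H::complex^'m^'m. det H = 0} \<in> sets borel"
    by (simp add: pred_def[symmetric])
  show "{t::real. H + t *\<^sub>R mat 1 \<in> {H. det H = 0}} \<in> null_sets lborel" for H :: "complex^'m^'m"
    using finite_imp_null_set_lborel[OF finite_singular_on_line[of H]] by simp
qed

lemma AE_cgauss_mat_invertible: "AE H in (cgauss_mat :: (complex^'m::finite^'m) measure). invertible H"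
proof -
  have "AE H in (lborel :: (complex^'m^'m) measure). invertible H"
    by (rule AE_I'[OF null_sets_singular]) (auto simp: invertible_det_nz)
  then show ?thesis
    unfolding cgauss_mat_def by (subst AE_density) (auto elim: AE_mp)
qed

section \<open>The pairwise error probability\<close>

lemma nn_integral_cgauss_exp_right_invertible_le:
  fixes W :: "complex^'m::finite^'m" and D K :: "complex^'t::finite^'m" and R :: "complex^'m^'t"
  assumes DR: "D ** R = mat 1" and W_norm: "norm W = 1" and c: "c > 0" and s: "s > 0"
  shows "(\<integral>\<^sup>+ H. ennreal (exp (- s * (norm (c *\<^sub>R (H ** W ** D) + K))\<^sup>2)) \<partial>cgauss_mat)
       \<le> ennreal ((real CARD('m) ^ 2 * (norm R)\<^sup>2 / (s * c\<^sup>2)) ^ CARD('m))"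
proof -
  obtain l j where lj: "1 \<le> real CARD('m) ^ 2 * (cmod (W$l$j))\<^sup>2"
    using exists_large_entry[of W] W_norm by (auto simp: power2_eq_square)
  define v where "v = c *\<^sub>R column j W"
  define u where "u = column j R"
  define a where "a = s / (norm R)\<^sup>2"
  have R: "norm R > 0"
    using right_inverse_nonzero[OF DR] by simp
  have a: "a > 0"
    using s R by (simp add: a_def)
  have Wlj: "(cmod (W$l$j))\<^sup>2 > 0"
    using lj by (cases "W$l$j = 0") auto
  have vl: "(cmod (v$l))\<^sup>2 = c\<^sup>2 * (cmod (W$l$j))\<^sup>2"
    using c by (simp add: v_def column_def power_mult_distrib)
  then have vl0: "v$l \<noteq> 0"
    using c Wlj by auto
  have pointwise: "exp (- s * (norm (c *\<^sub>R (H ** W ** D) + K))\<^sup>2) \<le> exp (- a * (norm (H *v v + K *v u))\<^sup>2)"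
    for H :: "complex^'m^'m"
  proof -
    have "norm (H *v v + K *v u) \<le> norm (c *\<^sub>R (H ** W ** D) + K) * norm R"
      unfolding u_def v_def by (rule norm_mult_column_right_inverse_le[OF DR])
    then have "(norm (H *v v + K *v u))\<^sup>2 \<le> (norm (c *\<^sub>R (H ** W ** D) + K))\<^sup>2 * (norm R)\<^sup>2"
      by (simp add: power_mono power_mult_distrib[symmetric])
    then show ?thesis
      using s R by (simp add: a_def field_simps)
  qed
  have "(\<integral>\<^sup>+ H. ennreal (exp (- s * (norm (c *\<^sub>R (H ** W ** D) + K))\<^sup>2)) \<partial>cgauss_mat)
      \<le> (\<integral>\<^sup>+ H. ennreal (exp (- a * (norm (H *v v + K *v u))\<^sup>2)) \<partial>(cgauss_mat :: (complex^'m^'m) measure))"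
    by (intro nn_integral_mono ennreal_leI pointwise)
  also have "\<dots> \<le> ennreal ((1 / (a * (cmod (v$l))\<^sup>2)) ^ CARD('m))"
    by (rule nn_integral_cgauss_exp_le[OF a vl0])
  also have "\<dots> \<le> ennreal ((real CARD('m) ^ 2 * (norm R)\<^sup>2 / (s * c\<^sup>2)) ^ CARD('m))"
  proof (intro ennreal_leI power_mono)
    have "1 / (a * (cmod (v$l))\<^sup>2) = (norm R)\<^sup>2 / (s * c\<^sup>2 * (cmod (W$l$j))\<^sup>2)"
      using s c R by (simp add: a_def vl field_simps)
    also have "\<dots> \<le> real CARD('m) ^ 2 * (norm R)\<^sup>2 / (s * c\<^sup>2)"
      using s c Wlj mult_left_mono[OF lj, of "(norm R)\<^sup>2"] by (simp add: field_simps)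
    finally show "1 / (a * (cmod (v$l))\<^sup>2) \<le> real CARD('m) ^ 2 * (norm R)\<^sup>2 / (s * c\<^sup>2)" .
  qed (use a vl0 in simp)
  finally show ?thesis .
qed

lemma nn_integral_cgauss_Qfun_right_invertible_le:
  fixes W :: "complex^'m::finite^'m" and D K :: "complex^'t::finite^'m" and R :: "complex^'m^'t"
  assumes DR: "D ** R = mat 1" and W_norm: "norm W = 1" and c: "c > 0" and \<sigma>2: "\<sigma>2 > 0" and P: "P > 0"
  shows "(\<integral>\<^sup>+ H. ennreal (Qfun (sqrt (P * (norm (c *\<^sub>R (H ** W ** D) + K))\<^sup>2 / (2 * \<sigma>2)))) \<partial>cgauss_mat)
       \<le> ennreal (2 * (8 * \<sigma>2 * real CARD('m) ^ 2 * (norm R)\<^sup>2 / c\<^sup>2) ^ CARD('m)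
                  * P powr - real CARD('m))"
proof -
  define s where "s = P / (8 * \<sigma>2)"
  have s: "s > 0" using P \<sigma>2 by (simp add: s_def)
  define E where "E H = exp (- s * (norm (c *\<^sub>R (H ** W ** D) + K))\<^sup>2)" for H :: "complex^'m^'m"
  have Q_le: "Qfun (sqrt (P * (norm (c *\<^sub>R (H ** W ** D) + K))\<^sup>2 / (2 * \<sigma>2))) \<le> 2 * E H" for H
    using Qfun_sqrt_le_exp[of "P * (norm (c *\<^sub>R (H ** W ** D) + K))\<^sup>2 / (2 * \<sigma>2)"] P \<sigma>2
    by (simp add: E_def s_def field_simps)
  have "continuous_on UNIV (\<lambda>H::complex^'m^'m. H ** W ** D)"
    unfolding matrix_matrix_mult_def by (intro continuous_intros)
  then have "E \<in> borel_measurable borel"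
    unfolding E_def by (intro borel_measurable_continuous_onI continuous_intros)
  then have E_meas: "(\<lambda>H. ennreal (E H)) \<in> borel_measurable cgauss_mat"
    unfolding cgauss_mat_def by (simp add: measurable_cong_sets[OF sets_density refl])
  have "(\<integral>\<^sup>+ H. ennreal (Qfun (sqrt (P * (norm (c *\<^sub>R (H ** W ** D) + K))\<^sup>2 / (2 * \<sigma>2)))) \<partial>cgauss_mat)
      \<le> (\<integral>\<^sup>+ H. 2 * ennreal (E H) \<partial>(cgauss_mat :: (complex^'m^'m) measure))"
  proof (rule nn_integral_mono)
    fix H :: "complex^'m^'m"
    have "ennreal (Qfun (sqrt (P * (norm (c *\<^sub>R (H ** W ** D) + K))\<^sup>2 / (2 * \<sigma>2)))) \<le> ennreal (2 * E H)"
      by (rule ennreal_leI[OF Q_le])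
    then show "ennreal (Qfun (sqrt (P * (norm (c *\<^sub>R (H ** W ** D) + K))\<^sup>2 / (2 * \<sigma>2)))) \<le> 2 * ennreal (E H)"
      by (simp add: E_def ennreal_mult)
  qed
  also have "\<dots> = 2 * (\<integral>\<^sup>+ H. ennreal (E H) \<partial>cgauss_mat)"
    by (rule nn_integral_cmult[OF E_meas])
  also have "\<dots> \<le> 2 * ennreal ((real CARD('m) ^ 2 * (norm R)\<^sup>2 / (s * c\<^sup>2)) ^ CARD('m))"
    unfolding E_def by (intro mult_left_mono nn_integral_cgauss_exp_right_invertible_le[OF DR W_norm c s]) simp
  also have "\<dots> = ennreal (2 * (8 * \<sigma>2 * real CARD('m) ^ 2 * (norm R)\<^sup>2 / c\<^sup>2) ^ CARD('m)
                  * P powr - real CARD('m))"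
  proof -
    have "(real CARD('m) ^ 2 * (norm R)\<^sup>2 / (s * c\<^sup>2)) ^ CARD('m)
        = (8 * \<sigma>2 * real CARD('m) ^ 2 * (norm R)\<^sup>2 / c\<^sup>2) ^ CARD('m) * P powr - real CARD('m)"
      using P \<sigma>2 by (simp add: s_def powr_minus powr_realpow power_divide power_mult_distrib field_simps)
    then show ?thesis
      using P \<sigma>2 by (simp add: ennreal_mult mult.assoc)
  qed
  finally show ?thesis .
qed

lemma nn_integral_channel_le_of_invertible_fst:
  assumes "\<And>H12 H21 H22. invertible H12 \<Longrightarrow> (\<integral>\<^sup>+ H11. f (H11, H12, H21, H22) \<partial>cgauss_mat) \<le> ennreal B"
  shows "(\<integral>\<^sup>+ z. f z \<partial>channel_measure) \<le> ennreal B"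
proof -
  let ?\<mu> = "cgauss_mat :: (complex^'m::finite^'m) measure"
  have \<mu>: "prob_space ?\<mu>" and \<mu>\<mu>: "prob_space (?\<mu> \<Otimes>\<^sub>M ?\<mu>)" and \<mu>\<mu>\<mu>: "prob_space (?\<mu> \<Otimes>\<^sub>M (?\<mu> \<Otimes>\<^sub>M ?\<mu>))"
    by (intro prob_space_pair prob_space_cgauss_mat)+
  have "(\<integral>\<^sup>+ z. f z \<partial>channel_measure) \<le> (\<integral>\<^sup>+ y. \<integral>\<^sup>+ H11. f (H11, y) \<partial>?\<mu> \<partial>(?\<mu> \<Otimes>\<^sub>M (?\<mu> \<Otimes>\<^sub>M ?\<mu>)))"
    unfolding channel_measure_def
    by (intro nn_integral_pair_le_iterated_snd prob_space_imp_sigma_finite \<mu> \<mu>\<mu>\<mu>)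
  also have "\<dots> \<le> ennreal B"
  proof (rule nn_integral_pair_le_of_AE_fst[OF \<mu> \<mu>\<mu>])
    show "AE H12 in ?\<mu>. (\<integral>\<^sup>+ z. \<integral>\<^sup>+ H11. f (H11, H12, z) \<partial>?\<mu> \<partial>(?\<mu> \<Otimes>\<^sub>M ?\<mu>)) \<le> ennreal B"
      using AE_cgauss_mat_invertible
    proof eventually_elim
      case (elim H12)
      show ?case
        using assms[OF elim] by (intro prob_space.nn_integral_le_const_AE[OF \<mu>\<mu>] AE_I2) auto
    qed
  qed
  finally show ?thesis .
qed

lemma nn_integral_channel_le_of_invertible_snd:
  assumes "\<And>H11 H12 H22. invertible H22 \<Longrightarrow> (\<integral>\<^sup>+ H21. f (H11, H12, H21, H22) \<partial>cgauss_mat) \<le> ennreal B"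
  shows "(\<integral>\<^sup>+ z. f z \<partial>channel_measure) \<le> ennreal B"
proof -
  let ?\<mu> = "cgauss_mat :: (complex^'m::finite^'m) measure"
  have \<mu>: "prob_space ?\<mu>" and \<mu>\<mu>: "prob_space (?\<mu> \<Otimes>\<^sub>M ?\<mu>)" and \<mu>\<mu>\<mu>: "prob_space (?\<mu> \<Otimes>\<^sub>M (?\<mu> \<Otimes>\<^sub>M ?\<mu>))"
    by (intro prob_space_pair prob_space_cgauss_mat)+
  have "(\<integral>\<^sup>+ w. f (H11, H12, w) \<partial>(?\<mu> \<Otimes>\<^sub>M ?\<mu>)) \<le> ennreal B" for H11 H12
  proof (rule nn_integral_pair_le_of_AE_snd[OF \<mu> \<mu>])
    show "AE H22 in ?\<mu>. (\<integral>\<^sup>+ H21. f (H11, H12, H21, H22) \<partial>?\<mu>) \<le> ennreal B"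
      using AE_cgauss_mat_invertible by eventually_elim (rule assms)
  qed
  then show ?thesis
    unfolding channel_measure_def
    by (intro nn_integral_pair_le_of_AE_fst[OF \<mu> \<mu>\<mu>\<mu>] AE_I2 nn_integral_pair_le_of_AE_fst[OF \<mu> \<mu>\<mu>]) auto
qed

lemma pep_decay_of_right_inverse_fst:
  fixes A A' B B' :: "complex^'t::finite^'m::finite" and R :: "complex^'m^'t"
  assumes DR: "(A - A') ** R = mat 1" and c1: "c1 > 0" and \<sigma>2: "\<sigma>2 > 0"
  shows "\<exists>\<kappa>>0. \<forall>P>0. pep c1 c2 \<sigma>2 P A A' B B' \<le> \<kappa> * P powr - real CARD('m)"
proof (intro exI conjI allI impI)
  define \<kappa> where "\<kappa> = 2 * (8 * \<sigma>2 * real CARD('m) ^ 2 * (norm R)\<^sup>2 / c1) ^ CARD('m)"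
  show "\<kappa> > 0"
    using right_inverse_nonzero[OF DR] c1 \<sigma>2 by (simp add: \<kappa>_def)
  fix P :: real assume P: "P > 0"
  have user1: "(\<integral>\<^sup>+ H11. ennreal (Qfun (sqrt (P * (norm (sqrt c1 *\<^sub>R (H11 ** precoder H12 ** (A - A')) + K))\<^sup>2
      / (2 * \<sigma>2)))) \<partial>cgauss_mat) \<le> ennreal (\<kappa> * P powr - real CARD('m))"
    if "invertible H12" for H12 :: "complex^'m^'m" and K
    using nn_integral_cgauss_Qfun_right_invertible_le[OF DR norm_precoder[OF that] _ \<sigma>2 P, of "sqrt c1" K] c1
    by (simp add: \<kappa>_def)
  show "pep c1 c2 \<sigma>2 P A A' B B' \<le> \<kappa> * P powr - real CARD('m)"
    unfolding pep_def
  proof (rule integral_le_of_nn_integral_le)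
    show "0 \<le> \<kappa> * P powr - real CARD('m)"
      using \<open>\<kappa> > 0\<close> by simp
  qed (auto simp: Qfun_nonneg intro!: nn_integral_channel_le_of_invertible_fst user1)
qed

lemma pep_decay_of_right_inverse_snd:
  fixes A A' B B' :: "complex^'t::finite^'m::finite" and R :: "complex^'m^'t"
  assumes DR: "(B - B') ** R = mat 1" and c2: "c2 > 0" and \<sigma>2: "\<sigma>2 > 0"
  shows "\<exists>\<kappa>>0. \<forall>P>0. pep c1 c2 \<sigma>2 P A A' B B' \<le> \<kappa> * P powr - real CARD('m)"
proof (intro exI conjI allI impI)
  define \<kappa> where "\<kappa> = 2 * (8 * \<sigma>2 * real CARD('m) ^ 2 * (norm R)\<^sup>2 / c2) ^ CARD('m)"
  show "\<kappa> > 0"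
    using right_inverse_nonzero[OF DR] c2 \<sigma>2 by (simp add: \<kappa>_def)
  fix P :: real assume P: "P > 0"
  have user2: "(\<integral>\<^sup>+ H21. ennreal (Qfun (sqrt (P * (norm (K + sqrt c2 *\<^sub>R (H21 ** precoder H22 ** (B - B'))))\<^sup>2
      / (2 * \<sigma>2)))) \<partial>cgauss_mat) \<le> ennreal (\<kappa> * P powr - real CARD('m))"
    if "invertible H22" for H22 :: "complex^'m^'m" and K
    using nn_integral_cgauss_Qfun_right_invertible_le[OF DR norm_precoder[OF that] _ \<sigma>2 P, of "sqrt c2" K] c2
    by (simp add: \<kappa>_def add.commute)
  show "pep c1 c2 \<sigma>2 P A A' B B' \<le> \<kappa> * P powr - real CARD('m)"
    unfolding pep_def
  proof (rule integral_le_of_nn_integral_le)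
    show "0 \<le> \<kappa> * P powr - real CARD('m)"
      using \<open>\<kappa> > 0\<close> by simp
  qed (auto simp: Qfun_nonneg intro!: nn_integral_channel_le_of_invertible_snd user2)
qed

text \<open>The rank condition alone provides the right inverses.\<close>

theorem theorem1:
  fixes c1 c2 \<sigma>2 :: real
    and C1 C2 :: "(complex^'t::finite^'m::finite) set"
    and A A' B B' :: "complex^'t^'m"
  assumes "CARD('m) \<le> CARD('t)"
    and "c1 > 0" and "c2 > 0" and "\<sigma>2 > 0"
    and "finite C1" and "finite C2"
    and "\<forall>X\<in>C1. \<forall>X'\<in>C1. X \<noteq> X' \<longrightarrow> rank (X - X') = CARD('m)"
    and "\<forall>Y\<in>C2. \<forall>Y'\<in>C2. Y \<noteq> Y' \<longrightarrow> rank (Y - Y') = CARD('m)"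
    and "A \<in> C1" and "A' \<in> C1" and "B \<in> C2" and "B' \<in> C2"
    and "(A, B) \<noteq> (A', B')"
  shows "\<exists>c>0. \<forall>\<^sub>F P in at_top.
           pep c1 c2 \<sigma>2 P A A' B B' \<le> c * P powr (- real CARD('m))"
proof -
  have "\<exists>\<kappa>>0. \<forall>P>0. pep c1 c2 \<sigma>2 P A A' B B' \<le> \<kappa> * P powr - real CARD('m)"
  proof (cases "A = A'")
    case False
    with assms(7,9,10) have "rank (A - A') = CARD('m)"
      by blast
    then obtain R where "(A - A') ** R = mat 1"
      using right_invertible_of_rank by blast
    then show ?thesis
      using assms(2,4) by (rule pep_decay_of_right_inverse_fst)
  next
    case True
    with assms(8,11-13) have "rank (B - B') = CARD('m)"
      by blast
    then obtain R where "(B - B') ** R = mat 1"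
      using right_invertible_of_rank by blast
    then show ?thesis
      using assms(3,4) by (rule pep_decay_of_right_inverse_snd)
  qed
  then obtain \<kappa> where \<kappa>: "\<kappa> > 0" "\<And>P. P > 0 \<Longrightarrow> pep c1 c2 \<sigma>2 P A A' B B' \<le> \<kappa> * P powr - real CARD('m)"
    by blast
  have "\<forall>\<^sub>F P in at_top. pep c1 c2 \<sigma>2 P A A' B B' \<le> \<kappa> * P powr - real CARD('m)"
    using eventually_gt_at_top[of "0::real"] by eventually_elim (rule \<kappa>(2))
  with \<kappa>(1) show ?thesis
    by blast
qed

end
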